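(* Let $s(x)=\sum_{n\ge0}s_nx^n\in\mathbb{R}[[x]]$ with $s_0=1$, and let $t(x)=1/s(x)=\sum_{n\ge0}t_nx^n$. Set $s_n=t_n=0$ for $n<0$. Then for all $M,N\in\mathbb{N}$, $$\det(s_{i+j-M})_{i,j=0}^{N+M}=(-1)^{N+\binom{M+1}{2}}\det(t_{i+j+M+2})_{i,j=0}^{N-1},$$ where the determinant of a $0\times 0$ matrix is $1$.
   Context: $\mathbb{N}=\{0,1,2,\dots\}$. *)

theory Defs
  imports "HOL-Computational_Algebra.Formal_Power_Series" "Jordan_Normal_Form.Determinant"
begin

definition zcoeff :: "'a::zero fps \<Rightarrow> int \<Rightarrow> 'a" where
  "zcoeff f k = (if k < 0 then 0 else fps_nth f (nat k))"

end

theory Submission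
  imports Defs
begin

text \<open>Let \<open>n = N + M + 1\<close>, \<open>L = N + n\<close>, \<open>t = 1/s\<close>, and let \<open>S\<close> be the lower triangular
  \<open>L \<times> L\<close> Toeplitz matrix of \<open>s\<close>, so \<open>det S = 1\<close>. Let \<open>P\<close> consist of the first \<open>N\<close> columns of
  the Toeplitz matrix of \<open>t\<close> followed by the anti-diagonal unit columns. Since \<open>s t = 1\<close>, the
  product \<open>S P\<close> is block upper triangular with blocks \<open>I\<^sub>N\<close> and the Hankel matrix of \<open>s\<close>, so
  the left-hand side is \<open>det P\<close>. Moving the last \<open>n\<close> columns of \<open>P\<close> to the front makes it block
  upper triangular again, with an anti-identity block of size \<open>n\<close> and a column-reversed copy
  of the Hankel matrix of \<open>t\<close>; collecting the signs gives the claim.\<close>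

lemma choose2_Suc: "Suc n choose 2 = n + (n choose 2)"
  using binomial_Suc_Suc[of n 1] by (simp add: numeral_2_eq_2)

lemma det_rev_first_cols:
  fixes A :: "'a::comm_ring_1 mat"
  assumes "A \<in> carrier_mat m m" "n \<le> m"
  shows "det (mat m m (\<lambda>(i, j). A $$ (i, if j < n then n - 1 - j else j)))
       = (-1) ^ (n choose 2) * det A"
  using assms
proof (induction n arbitrary: A)
  case 0
  have "mat m m (\<lambda>(i, j). A $$ (i, if j < 0 then 0 - 1 - j else j)) = A"
    using 0 by (intro eq_matI) auto
  then show ?case by (simp only:) (simp add: numeral_2_eq_2)
next
  case (Suc n)
  define B where "B = mat m m (\<lambda>(i, j). A $$ (i, if j < Suc n then Suc n - 1 - j else j))"
  have B: "B \<in> carrier_mat m m" unfolding B_def by simp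
  have "det B = (-1) ^ (1 * n)
      * det (mat m m (\<lambda>(i, j). B $$ (i, if j < n then j + 1 else if j < 1 + n then j - n else j)))"
    by (rule det_swap_initial_cols[OF B]) (use Suc in simp)
  also have "mat m m (\<lambda>(i, j). B $$ (i, if j < n then j + 1 else if j < 1 + n then j - n else j))
           = mat m m (\<lambda>(i, j). A $$ (i, if j < n then n - 1 - j else j))"
    using Suc.prems unfolding B_def by (intro eq_matI) (auto simp: less_Suc_eq)
  also have "det \<dots> = (-1) ^ (n choose 2) * det A" using Suc by simp
  finally have "det B = (-1) ^ (n + (n choose 2)) * det A" by (simp add: power_add)
  then show ?case unfolding B_def by (simp add: choose2_Suc)
qed

lemma det_rev_cols:
  fixes A :: "'a::comm_ring_1 mat"
  assumes "A \<in> carrier_mat m m"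
  shows "det (mat m m (\<lambda>(i, j). A $$ (i, m - 1 - j))) = (-1) ^ (m choose 2) * det A"
proof -
  have "mat m m (\<lambda>(i, j). A $$ (i, m - 1 - j))
      = mat m m (\<lambda>(i, j). A $$ (i, if j < m then m - 1 - j else j))"
    by (intro eq_matI) auto
  then show ?thesis using det_rev_first_cols[OF assms order_refl] by simp
qed

lemma det_anti_identity:
  "det (mat n n (\<lambda>(i, j). if i + j = n - 1 then 1 else 0) :: 'a::comm_ring_1 mat)
   = (-1) ^ (n choose 2)"
proof -
  have "mat n n (\<lambda>(i, j). if i + j = n - 1 then 1 else 0)
      = mat n n (\<lambda>(i, j). (1\<^sub>m n :: 'a mat) $$ (i, n - 1 - j))"
    by (rule eq_matI) auto
  then show ?thesis using det_rev_cols[of "1\<^sub>m n :: 'a mat" n] by simp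
qed

lemma choose2_add: "(a + b) choose 2 = (a choose 2) + (b choose 2) + a * b"
  by (induction a) (simp_all add: choose2_Suc)

lemma neg_one_power_hankel_sign:
  "(-1 :: 'a::comm_ring_1) ^ ((N + M + 1) * N + ((N + M + 1) choose 2) + (N choose 2))
   = (-1) ^ (N + ((M + 1) choose 2))"
proof -
  have "N * N = N + 2 * (N choose 2)"
    by (induction N) (auto simp: choose2_Suc algebra_simps)
  then have "(N + M + 1) * N + ((N + M + 1) choose 2) + (N choose 2)
           = (N + ((M + 1) choose 2)) + 2 * (2 * (N choose 2) + N * (M + 1))"
    using choose2_add[of N "M + 1"] by (simp add: algebra_simps)
  then show ?thesis by (simp only: power_add power_mult) simp
qed

definition lower_toeplitz_mat :: "nat \<Rightarrow> 'a::zero fps \<Rightarrow> 'a mat" where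
  "lower_toeplitz_mat L f = mat L L (\<lambda>(i, j). zcoeff f (int i - int j))"

definition toeplitz_antidiag_mat :: "nat \<Rightarrow> nat \<Rightarrow> 'a::{zero,one} fps \<Rightarrow> 'a mat" where
  "toeplitz_antidiag_mat N L g =
     mat L L (\<lambda>(i, j). if j < N then zcoeff g (int i - int j) else if i + j = L - 1 then 1 else 0)"

lemma lower_toeplitz_mat_carrier [simp]: "lower_toeplitz_mat L f \<in> carrier_mat L L"
  by (simp add: lower_toeplitz_mat_def)

lemma toeplitz_antidiag_mat_carrier [simp]: "toeplitz_antidiag_mat N L g \<in> carrier_mat L L"
  by (simp add: toeplitz_antidiag_mat_def)

lemma det_lower_toeplitz_mat: "det (lower_toeplitz_mat L f) = fps_nth f 0 ^ L"
proof -
  have "det (lower_toeplitz_mat L f) = prod_list (diag_mat (lower_toeplitz_mat L f))"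
    by (rule det_lower_triangular[where n = L]) (auto simp: lower_toeplitz_mat_def zcoeff_def)
  also have "diag_mat (lower_toeplitz_mat L f) = replicate L (fps_nth f 0)"
    by (rule nth_equalityI) (auto simp: diag_mat_def lower_toeplitz_mat_def zcoeff_def)
  finally show ?thesis by simp
qed

lemma sum_zcoeff_mult:
  fixes f g :: "'a::comm_semiring_1 fps"
  assumes "i < L"
  shows "(\<Sum>k<L. zcoeff f (int i - int k) * zcoeff g (int k - int j))
       = zcoeff (g * f) (int i - int j)"
proof (cases "j \<le> i")
  case False
  then show ?thesis by (intro trans[OF sum.neutral]) (auto simp: zcoeff_def)
next
  case True
  define d where "d = i - j"
  let ?term = "\<lambda>k. zcoeff f (int i - int k) * zcoeff g (int k - int j)"
  have "(\<Sum>k<L. ?term k) = (\<Sum>k\<in>{0 + j..d + j}. ?term k)"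
    by (rule sum.mono_neutral_right) (use assms True in \<open>auto simp: zcoeff_def d_def\<close>)
  also have "\<dots> = (\<Sum>m\<in>{0..d}. ?term (m + j))" by (rule sum.shift_bounds_cl_nat_ivl)
  also have "\<dots> = (\<Sum>m\<in>{0..d}. fps_nth g m * fps_nth f (d - m))"
  proof (intro sum.cong refl)
    fix m assume "m \<in> {0..d}"
    then have "int i - int (m + j) = int (d - m)" "int (m + j) - int j = int m"
      using True by (auto simp: d_def)
    then show "?term (m + j) = fps_nth g m * fps_nth f (d - m)"
      by (simp add: zcoeff_def mult.commute)
  qed
  also have "\<dots> = fps_nth (g * f) d" by (simp add: fps_mult_nth)
  also have "\<dots> = zcoeff (g * f) (int i - int j)"
    using True by (simp add: zcoeff_def d_def flip: of_nat_diff)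
  finally show ?thesis .
qed

text \<open>The first \<open>N\<close> columns of the product are those of the Toeplitz matrix of \<open>g f = 1\<close>; the
  others pick out columns of the Toeplitz matrix of \<open>f\<close> in reverse order, which turns its
  Toeplitz entries into Hankel entries.\<close>
lemma lower_toeplitz_mult_toeplitz_antidiag_nth:
  fixes f g :: "'a::comm_semiring_1 fps"
  assumes "g * f = 1" "i < L" "j < L"
  shows "(lower_toeplitz_mat L f * toeplitz_antidiag_mat N L g) $$ (i, j)
       = (if j < N then of_bool (i = j) else zcoeff f (int i + int j + 1 - int L))"
proof -
  have "(lower_toeplitz_mat L f * toeplitz_antidiag_mat N L g) $$ (i, j)
      = (\<Sum>k<L. zcoeff f (int i - int k) * toeplitz_antidiag_mat N L g $$ (k, j))"
    using assms by (simp add: scalar_prod_def lessThan_atLeast0 lower_toeplitz_mat_def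
        toeplitz_antidiag_mat_def)
  also have "\<dots> = (if j < N then of_bool (i = j) else zcoeff f (int i + int j + 1 - int L))"
  proof (cases "j < N")
    case True
    then have "(\<Sum>k<L. zcoeff f (int i - int k) * toeplitz_antidiag_mat N L g $$ (k, j))
             = (\<Sum>k<L. zcoeff f (int i - int k) * zcoeff g (int k - int j))"
      using assms by (intro sum.cong) (auto simp: toeplitz_antidiag_mat_def)
    also have "\<dots> = zcoeff (g * f) (int i - int j)"
      using assms(2) by (rule sum_zcoeff_mult)
    also have "\<dots> = of_bool (i = j)"
      using assms by (simp add: zcoeff_def)
    finally show ?thesis using True by simp
  next
    case False
    then have "(\<Sum>k<L. zcoeff f (int i - int k) * toeplitz_antidiag_mat N L g $$ (k, j))
             = (\<Sum>k<L. if k = L - 1 - j then zcoeff f (int i - int k) else 0)"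
      using assms by (intro sum.cong) (auto simp: toeplitz_antidiag_mat_def)
    also have "\<dots> = zcoeff f (int i + int j + 1 - int L)"
      using assms by (simp add: of_nat_diff algebra_simps)
    finally show ?thesis using False by simp
  qed
  finally show ?thesis .
qed

lemma det_hankel_eq_det_toeplitz_antidiag:
  fixes s :: "'a::field fps"
  assumes s0: "fps_nth s 0 = 1"
  shows "det (mat (N + M + 1) (N + M + 1) (\<lambda>(i, j). zcoeff s (int i + int j - int M)))
       = det (toeplitz_antidiag_mat N (N + (N + M + 1)) (inverse s))"
proof -
  define n where "n = N + M + 1"
  define L where "L = N + n"
  define S where "S = lower_toeplitz_mat L s"
  define P where "P = toeplitz_antidiag_mat N L (inverse s)"
  define H where "H = mat n n (\<lambda>(i, j). zcoeff s (int i + int j - int M))"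
  define Y where "Y = mat N n (\<lambda>(i, j). (S * P) $$ (i, j + N))"
  have inv: "inverse s * s = 1" using s0 by (simp add: inverse_mult_eq_1)
  have SP: "(S * P) $$ (i, j)
      = (if j < N then of_bool (i = j) else zcoeff s (int i + int j + 1 - int L))"
    if "i < L" "j < L" for i j
    using lower_toeplitz_mult_toeplitz_antidiag_nth[OF inv that] by (simp add: S_def P_def)
  have SP_block: "S * P = four_block_mat (1\<^sub>m N) Y (0\<^sub>m n N) H"
  proof (rule eq_matI)
    fix i j assume "i < dim_row (four_block_mat (1\<^sub>m N) Y (0\<^sub>m n N) H)"
      "j < dim_col (four_block_mat (1\<^sub>m N) Y (0\<^sub>m n N) H)"
    then have ij: "i < L" "j < L" by (auto simp: L_def Y_def H_def)
    show "(S * P) $$ (i, j) = four_block_mat (1\<^sub>m N) Y (0\<^sub>m n N) H $$ (i, j)"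
    proof (cases "i < N \<and> N \<le> j")
      case True
      then show ?thesis using ij by (auto simp: Y_def H_def L_def)
    next
      case False
      then show ?thesis using ij
        by (auto simp: SP H_def L_def n_def intro!: arg_cong[where f = "zcoeff s"])
    qed
  qed (auto simp: S_def P_def Y_def H_def L_def lower_toeplitz_mat_def
      toeplitz_antidiag_mat_def)
  have "det (S * P) = det H"
    unfolding SP_block
    by (subst det_four_block_mat_lower_left_zero[of _ N _ n]) (auto simp: Y_def H_def)
  moreover have "det (S * P) = det P"
    using s0 by (simp add: det_mult[of _ L] S_def P_def det_lower_toeplitz_mat)
  ultimately show ?thesis by (simp add: H_def P_def L_def n_def)
qed

lemma det_toeplitz_antidiag:
  fixes g :: "'a::idom fps" and N M :: nat
  defines "n \<equiv> N + M + 1"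
  shows "det (toeplitz_antidiag_mat N (N + n) g)
       = (-1) ^ (n * N + (n choose 2) + (N choose 2))
         * det (mat N N (\<lambda>(i, j). zcoeff g (int i + int j + int M + 2)))"
proof -
  define G where "G = mat N N (\<lambda>(i, j). zcoeff g (int i + int j + int M + 2))"
  define Q where "Q = mat (n + N) (n + N)
    (\<lambda>(i, j). toeplitz_antidiag_mat N (N + n) g $$ (i, if j < n then j + N else j - n))"
  define J where "J = mat n n (\<lambda>(i, j). if i + j = n - 1 then 1 else (0::'a))"
  define X where "X = mat n N (\<lambda>(i, j). Q $$ (i, j + n))"
  define T where "T = mat N N (\<lambda>(i, j). G $$ (i, N - 1 - j))"
  have Q_block: "Q = four_block_mat J X (0\<^sub>m N n) T"
    by (rule eq_matI)
      (auto simp: Q_def J_def X_def T_def G_def toeplitz_antidiag_mat_def n_def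
        intro!: arg_cong[where f = "zcoeff g"])
  have "det (toeplitz_antidiag_mat N (N + n) g) = (-1) ^ (n * N) * det Q"
    unfolding Q_def by (rule det_swap_cols) (simp add: add.commute)
  moreover have "det Q = det J * det T"
    unfolding Q_block
    by (subst det_four_block_mat_lower_left_zero[of _ n _ N]) (auto simp: J_def X_def T_def)
  moreover have "det J = (-1) ^ (n choose 2)"
    unfolding J_def by (rule det_anti_identity)
  moreover have "det T = (-1) ^ (N choose 2) * det G"
    unfolding T_def by (rule det_rev_cols) (simp add: G_def)
  ultimately show ?thesis by (simp add: G_def power_add)
qed

theorem lemma2p1:
  fixes s :: "real fps" and M N :: nat
  assumes "fps_nth s 0 = 1"
  shows "det (mat (N + M + 1) (N + M + 1) (\<lambda>(i, j). zcoeff s (int i + int j - int M)))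
       = (-1) ^ (N + ((M + 1) choose 2))
         * det (mat N N (\<lambda>(i, j). zcoeff (inverse s) (int i + int j + int M + 2)))"
proof -
  have "det (mat (N + M + 1) (N + M + 1) (\<lambda>(i, j). zcoeff s (int i + int j - int M)))
      = det (toeplitz_antidiag_mat N (N + (N + M + 1)) (inverse s))"
    by (rule det_hankel_eq_det_toeplitz_antidiag[OF assms])
  also have "\<dots> = (-1) ^ ((N + M + 1) * N + ((N + M + 1) choose 2) + (N choose 2))
      * det (mat N N (\<lambda>(i, j). zcoeff (inverse s) (int i + int j + int M + 2)))"
    by (rule det_toeplitz_antidiag)
  also have "(-1 :: real) ^ ((N + M + 1) * N + ((N + M + 1) choose 2) + (N choose 2))
      = (-1) ^ (N + ((M + 1) choose 2))"
    by (rule neg_one_power_hankel_sign)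
  finally show ?thesis .
qed

end
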